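(* Let $\check\Delta_0:=\mathrm{Conv}\big(\{\rho\}\cup\{(n_\tau,\varphi_\Delta(n_\tau)):\tau\text{ a codimension one face of }\Delta\}\big)\subset\bar N_{\mathbb R}$. Then $\dim\check\Delta_0=d+2$ if $\dim\Delta'>0$, and $\dim\check\Delta_0=d+1$ if $\dim\Delta'=0$.
   Context: $M\cong\mathbb Z^{d+1}$, $N$ dual, $\bar N=N\oplus\mathbb Z$, $\rho=(0,1)$. $\Delta\subset M_{\mathbb R}$ is a lattice polytope with $\dim\Delta=d+1$, $\mathbb P_\Delta$ non-singular, with at least one interior lattice point; $\Delta'=\mathrm{Conv}(\mathrm{Int}(\Delta)\cap M)$. $\varphi_\Delta(n)=-\inf_{m\in\Delta}\langle n,m\rangle$; for a codimension one face $\tau$, $n_\tau\in N$ is its primitive inward normal vector. Standing assumption: $\Delta$ admits a regular refinement of the subdivision $\mathcal P_*$ (projection of the lower faces of $\mathrm{Conv}\{(m,h_*(m))\}$, $h_*=0$ on boundary, $-1$ on interior lattice points) into standard simplices. *)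

theory Defs
  imports "HOL-Analysis.Analysis"
begin

text \<open>The lattice M = Z^(d+1) inside M_R = real^'n (and likewise N, identified with M
  via the standard inner product as the dual pairing).\<close>
definition lattice_pts :: "(real^'n) set" where
  "lattice_pts = {x. \<forall>i. x $ i \<in> \<int>}"

definition lattice_polytope :: "(real^'n) set \<Rightarrow> bool" where
  "lattice_polytope P \<longleftrightarrow> (\<exists>S. finite S \<and> S \<subseteq> lattice_pts \<and> P = convex hull S)"

definition phiP :: "(real^'n) set \<Rightarrow> real^'n \<Rightarrow> real" where
  "phiP P n = - (INF m\<in>P. n \<bullet> m)"

definition primitive_vec :: "real^'n \<Rightarrow> bool" where
  "primitive_vec n \<longleftrightarrow> n \<in> lattice_pts \<and> n \<noteq> 0 \<and>
     (\<forall>k::int. \<forall>z\<in>lattice_pts. n = of_int k *\<^sub>R z \<longrightarrow> \<bar>k\<bar> = 1)"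

definition codim1_face :: "(real^'n) set \<Rightarrow> (real^'n) set \<Rightarrow> bool" where
  "codim1_face \<tau> P \<longleftrightarrow> \<tau> face_of P \<and> aff_dim \<tau> = aff_dim P - 1"

definition inward_normal :: "(real^'n) set \<Rightarrow> (real^'n) set \<Rightarrow> real^'n \<Rightarrow> bool" where
  "inward_normal P \<tau> n \<longleftrightarrow> primitive_vec n \<and> (\<forall>m\<in>P. - phiP P n \<le> n \<bullet> m) \<and>
     \<tau> = {m\<in>P. n \<bullet> m = - phiP P n}"

text \<open>Non-singularity of the toric variety P_Delta: at each vertex, the primitive inward
  normals of the facets through it form a Z-basis of N.\<close>
definition nonsingular :: "(real^'n) set \<Rightarrow> bool" where
  "nonsingular P \<longleftrightarrow> (\<forall>v. v extreme_point_of P \<longrightarrow>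
     (let S = {n. \<exists>\<tau>. codim1_face \<tau> P \<and> v \<in> \<tau> \<and> inward_normal P \<tau> n} in
       card S = CARD('n) \<and>
       (\<forall>z\<in>lattice_pts. \<exists>c :: real^'n \<Rightarrow> int. z = (\<Sum>s\<in>S. of_int (c s) *\<^sub>R s))))"

definition standard_simplex :: "(real^'n) set \<Rightarrow> bool" where
  "standard_simplex T \<longleftrightarrow> (\<exists>v0 V. v0 \<in> lattice_pts \<and> V \<subseteq> lattice_pts \<and> card V = CARD('n) \<and>
     T = convex hull (insert v0 V) \<and>
     (\<forall>z\<in>lattice_pts. \<exists>c :: real^'n \<Rightarrow> int. z = (\<Sum>v\<in>V. of_int (c v) *\<^sub>R (v - v0))))"

definition lifted :: "(real^'n) set \<Rightarrow> (real^'n \<Rightarrow> real) \<Rightarrow> ((real^'n) \<times> real) set" where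
  "lifted P h = convex hull {(m, h m) | m. m \<in> P \<inter> lattice_pts}"

text \<open>Projections of the lower faces of the lifted polytope: the cells of the induced
  (regular) subdivision.\<close>
definition lower_cells :: "(real^'n) set \<Rightarrow> (real^'n \<Rightarrow> real) \<Rightarrow> (real^'n) set set" where
  "lower_cells P h = {fst ` F | F. F \<noteq> {} \<and> (\<exists>u c.
      (\<forall>p\<in>lifted P h. c \<le> u \<bullet> fst p + snd p) \<and> F = {p\<in>lifted P h. u \<bullet> fst p + snd p = c})}"

definition h_star :: "(real^'n) set \<Rightarrow> real^'n \<Rightarrow> real" where
  "h_star P m = (if m \<in> interior P then -1 else 0)"

definition admits_regular_standard_refinement :: "(real^'n) set \<Rightarrow> bool" where
  "admits_regular_standard_refinement P \<longleftrightarrow> (\<exists>\<omega>. \<forall>C\<in>lower_cells P \<omega>.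
     aff_dim C = aff_dim P \<longrightarrow> standard_simplex C \<and> (\<exists>D\<in>lower_cells P (h_star P). C \<subseteq> D))"

definition Delta' :: "(real^'n) set \<Rightarrow> (real^'n) set" where
  "Delta' P = convex hull (interior P \<inter> lattice_pts)"

text \<open>check Delta_0 = Conv({rho} \<union> {(n_tau, phi(n_tau))}) in N_R x R, rho = (0,1).\<close>
definition check_Delta0 :: "(real^'n) set \<Rightarrow> ((real^'n) \<times> real) set" where
  "check_Delta0 P = convex hull (insert (0, 1)
     {(n, phiP P n) | n. \<exists>\<tau>. codim1_face \<tau> P \<and> inward_normal P \<tau> n})"

end

theory Submission
  imports Defs
begin

text \<open>Let \<open>N\<close> be the set of primitive inward facet normals of \<open>\<Delta>\<close>. The facet normals of a
  bounded polytope span \<open>N\<^sub>\<real>\<close>, so \<open>\<rho>\<close> and the points \<open>(n, \<phi>(n))\<close>, \<open>n \<in> N\<close>, affinely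
  span a hyperplane exactly when \<open>\<phi>(n) = 1 - \<langle>n, p\<rangle>\<close> for a single \<open>p\<close>, i.e. when every facet lies
  at lattice distance one from \<open>p\<close>; otherwise they span all of \<open>N\<^sub>\<real> \<times> \<real>\<close>.

  If every facet lies at lattice distance one from \<open>p\<close>, an interior lattice point \<open>m\<close> has
  distance at least one from every facet, so \<open>\<langle>n, m - p\<rangle> \<ge> 0\<close> for all facet normals and hence
  \<open>m = p\<close>: then \<open>\<Delta>'\<close> is a point. Conversely, if \<open>m\<^sub>0\<close> is the only interior lattice point, the
  lifting \<open>h\<^sub>*\<close> turns \<open>\<Delta>\<close> into a pyramid with apex \<open>(m\<^sub>0, -1)\<close>, whose lower faces lie over
  the pyramids \<open>conv({m\<^sub>0} \<union> \<tau>)\<close>. A unimodular simplex of the refinement inside the pyramid over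
  a facet \<open>\<tau>\<close> has its vertices at height \<open>0\<close> or \<open>1\<close> with respect to \<open>\<tau>\<close>, measured in units of
  the distance \<open>k\<close> of \<open>m\<^sub>0\<close> from \<open>\<tau>\<close>; unimodularity then forces \<open>k = 1\<close>.\<close>

section \<open>Lattice points and primitive vectors\<close>

lemma lattice_pts_diff: "x \<in> lattice_pts \<Longrightarrow> y \<in> lattice_pts \<Longrightarrow> x - y \<in> lattice_pts"
  by (auto simp: lattice_pts_def)

lemma lattice_pts_uminus: "x \<in> lattice_pts \<Longrightarrow> - x \<in> lattice_pts"
  by (auto simp: lattice_pts_def)

lemma lattice_pts_scaleR_of_int: "x \<in> lattice_pts \<Longrightarrow> of_int k *\<^sub>R x \<in> lattice_pts"
  by (auto simp: lattice_pts_def)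

lemma axis_in_lattice_pts: "axis i 1 \<in> lattice_pts"
  by (auto simp: lattice_pts_def axis_def)

lemma inner_lattice_pts_Ints: "x \<in> lattice_pts \<Longrightarrow> y \<in> lattice_pts \<Longrightarrow> x \<bullet> y \<in> \<int>"
  unfolding inner_vec_def lattice_pts_def by (auto intro!: Ints_mult)

lemma Ints_less_imp_add_1_le: "(a::real) \<in> \<int> \<Longrightarrow> b \<in> \<int> \<Longrightarrow> a < b \<Longrightarrow> a + 1 \<le> b"
  by (elim Ints_cases) simp

lemma finite_bounded_Int_lattice_pts:
  fixes A :: "(real^'n) set"
  assumes "bounded A"
  shows "finite (A \<inter> lattice_pts)"
proof -
  obtain R where R: "\<And>x. x \<in> A \<Longrightarrow> norm x \<le> R" using assms bounded_iff by blast
  let ?box = "PiE UNIV (\<lambda>i::'n. {-\<lceil>R\<rceil>..\<lceil>R\<rceil>})"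
  have "A \<inter> lattice_pts \<subseteq> (\<lambda>f. \<chi> i. of_int (f i)) ` ?box"
  proof
    fix x assume x: "x \<in> A \<inter> lattice_pts"
    have x_floor: "of_int \<lfloor>x $ i\<rfloor> = x $ i" for i
      using x by (auto simp: lattice_pts_def elim: Ints_cases)
    have "\<lfloor>x $ i\<rfloor> \<in> {-\<lceil>R\<rceil>..\<lceil>R\<rceil>}" for i
    proof -
      have "\<bar>x $ i\<bar> \<le> R" using component_le_norm_cart[of x i] R[of x] x by auto
      then have "real_of_int (-\<lceil>R\<rceil>) \<le> of_int \<lfloor>x $ i\<rfloor> \<and> real_of_int \<lfloor>x $ i\<rfloor> \<le> of_int \<lceil>R\<rceil>"
        using x_floor[of i] ceiling_correct[of R] by linarith
      then show ?thesis unfolding of_int_le_iff by simp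
    qed
    then have "(\<lambda>i. \<lfloor>x $ i\<rfloor>) \<in> ?box" by auto
    moreover have "x = (\<chi> i. of_int \<lfloor>x $ i\<rfloor>)" by (simp add: vec_eq_iff x_floor)
    ultimately show "x \<in> (\<lambda>f. \<chi> i. of_int (f i)) ` ?box" by (metis image_eqI)
  qed
  moreover have "finite ?box" by (intro finite_PiE) auto
  ultimately show ?thesis using finite_subset by blast
qed

lemma primitive_vec_uminus: "primitive_vec z \<Longrightarrow> primitive_vec (- z)"
  unfolding primitive_vec_def
proof (intro conjI allI ballI impI)
  assume z: "z \<in> lattice_pts \<and> z \<noteq> 0 \<and> (\<forall>k. \<forall>w\<in>lattice_pts. z = real_of_int k *\<^sub>R w \<longrightarrow> \<bar>k\<bar> = 1)"
  then show "- z \<in> lattice_pts" "- z \<noteq> 0" using lattice_pts_uminus by auto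
  fix k :: int and w assume "w \<in> lattice_pts" "- z = of_int k *\<^sub>R w"
  then have "z = of_int (- k) *\<^sub>R w" by (metis minus_minus of_int_minus scaleR_minus_left)
  then have "\<bar>- k\<bar> = 1" using z \<open>w \<in> lattice_pts\<close> by blast
  then show "\<bar>k\<bar> = 1" by simp
qed

lemma lattice_pt_primitive_multiple:
  fixes n :: "real^'n"
  assumes "n \<in> lattice_pts" "n \<noteq> 0"
  obtains k :: nat and z where "k > 0" "primitive_vec z" "n = real k *\<^sub>R z"
proof -
  obtain i where i: "n $ i \<noteq> 0" using assms(2) by (metis vec_eq_iff zero_index)
  define Ks where "Ks = {k::nat. k > 0 \<and> (\<exists>z\<in>lattice_pts. n = real k *\<^sub>R z)}"
  have Ks_bound: "real k \<le> \<bar>n $ i\<bar>" if k: "k \<in> Ks" for k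
  proof -
    obtain z where z: "z \<in> lattice_pts" "n = real k *\<^sub>R z" using k unfolding Ks_def by blast
    have "z $ i \<in> \<int>" "z $ i \<noteq> 0" using z i by (auto simp: lattice_pts_def)
    then have "1 \<le> \<bar>z $ i\<bar>" by (elim Ints_cases) auto
    then show ?thesis using z(2) by (simp add: abs_mult mult_le_cancel_left1)
  qed
  have "Ks \<subseteq> {..nat \<lceil>\<bar>n $ i\<bar>\<rceil>}" using Ks_bound by (force simp: le_nat_iff le_ceiling_iff)
  then have "finite Ks" by (rule finite_subset) simp
  moreover have "1 \<in> Ks" using assms(1) by (auto simp: Ks_def)
  ultimately obtain k0 where k0: "k0 \<in> Ks" "\<And>k. k \<in> Ks \<Longrightarrow> k \<le> k0"
    by (metis Max_ge Max_in empty_iff)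
  then obtain z where z: "k0 > 0" "z \<in> lattice_pts" "n = real k0 *\<^sub>R z"
    unfolding Ks_def by blast
  have "primitive_vec z"
    unfolding primitive_vec_def
  proof (intro conjI allI ballI impI)
    show "z \<in> lattice_pts" "z \<noteq> 0" using z assms(2) by auto
    fix j :: int and w assume w: "w \<in> lattice_pts" "z = of_int j *\<^sub>R w"
    have "j \<noteq> 0" using w \<open>z \<noteq> 0\<close> by auto
    have "of_int (sgn j) *\<^sub>R w \<in> lattice_pts" using w(1) lattice_pts_scaleR_of_int by blast
    moreover have "n = real (k0 * nat \<bar>j\<bar>) *\<^sub>R (of_int (sgn j) *\<^sub>R w)"
      using z(3) w(2) \<open>j \<noteq> 0\<close> by (simp add: scaleR_scaleR) (simp add: abs_if sgn_if)
    moreover have "k0 * nat \<bar>j\<bar> > 0" using z(1) \<open>j \<noteq> 0\<close> by simp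
    ultimately have "k0 * nat \<bar>j\<bar> \<in> Ks" unfolding Ks_def by blast
    then have "k0 * nat \<bar>j\<bar> \<le> k0" by (rule k0(2))
    then show "\<bar>j\<bar> = 1" using z(1) \<open>j \<noteq> 0\<close> by simp
  qed
  then show thesis using that z by blast
qed

text \<open>Bezout: the values of a primitive vector on the lattice form the ideal \<open>g\<int>\<close>, with \<open>g\<close>
  the least positive value; every coordinate of the vector is a multiple of \<open>g\<close>, so \<open>g = 1\<close>.\<close>
lemma primitive_vec_inner_eq_1:
  assumes "primitive_vec n"
  obtains z where "z \<in> lattice_pts" "n \<bullet> z = 1"
proof -
  have n: "n \<in> lattice_pts" "n \<noteq> 0" using assms by (auto simp: primitive_vec_def)
  define G where "G = {k::nat. k > 0 \<and> (\<exists>z\<in>lattice_pts. n \<bullet> z = real k)}"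
  obtain q where q: "n \<bullet> n = of_int q" using inner_lattice_pts_Ints[OF n(1) n(1)] by (elim Ints_cases)
  have "n \<bullet> n > 0" using n by simp
  then have "nat q \<in> G" using q n by (auto simp: G_def intro!: bexI[of _ n])
  define g where "g = (LEAST k. k \<in> G)"
  have "g \<in> G" unfolding g_def by (rule LeastI) fact
  then obtain zg where zg: "zg \<in> lattice_pts" "n \<bullet> zg = real g" "g > 0" by (auto simp: G_def)
  have "\<exists>qi::int. n $ i = of_int qi * real g" for i
  proof -
    obtain a where a: "n $ i = of_int a" using n(1) by (auto simp: lattice_pts_def elim: Ints_cases)
    define r where "r = a mod int g"
    have a_div_mod: "a = a div int g * int g + r" unfolding r_def by simp
    have "n \<bullet> (axis i 1 - of_int (a div int g) *\<^sub>R zg) = of_int r"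
      using a zg(2) by (subst (asm) a_div_mod) (simp add: inner_diff_right inner_axis)
    moreover have "axis i 1 - of_int (a div int g) *\<^sub>R zg \<in> lattice_pts"
      using axis_in_lattice_pts lattice_pts_scaleR_of_int zg(1) lattice_pts_diff by blast
    ultimately have "r > 0 \<Longrightarrow> nat r \<in> G" by (auto simp: G_def)
    moreover have "nat r \<in> G \<Longrightarrow> g \<le> nat r" unfolding g_def by (rule Least_le)
    moreover have "0 \<le> r" "r < int g" using zg(3) unfolding r_def by auto
    ultimately have "r = 0" by linarith
    then show ?thesis using a by (auto simp: r_def intro!: exI[of _ "a div int g"])
  qed
  then obtain qf where qf: "\<And>i. n $ i = of_int (qf i) * real g" by metis
  have "(\<chi> i. (of_int (qf i) :: real)) \<in> lattice_pts" by (simp add: lattice_pts_def)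
  moreover have "n = of_int (int g) *\<^sub>R (\<chi> i. (of_int (qf i) :: real))" by (simp add: vec_eq_iff qf)
  ultimately have "\<bar>int g\<bar> = 1" using assms unfolding primitive_vec_def by blast
  then have "g = 1" by simp
  then show thesis using that zg by auto
qed

lemma abs_inner_le_box:
  fixes b x :: "real^'n" and K N :: real
  assumes "\<And>i. \<bar>b $ i\<bar> \<le> K" "\<And>i. 0 \<le> x $ i" "\<And>i. x $ i \<le> N"
  shows "\<bar>b \<bullet> x\<bar> \<le> CARD('n) * K * N"
proof -
  have "\<bar>b \<bullet> x\<bar> \<le> (\<Sum>i\<in>UNIV. \<bar>b $ i\<bar> * x $ i)"
    using assms(2) unfolding inner_vec_def inner_real_def
    by (metis (no_types, lifting) abs_mult abs_of_nonneg sum.cong sum_abs)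
  also have "\<dots> \<le> (\<Sum>i\<in>(UNIV::'n set). K * N)"
    using assms by (intro sum_mono mult_mono) (auto intro: order.trans[OF abs_ge_zero])
  finally show ?thesis by simp
qed

lemma power_box_count_less:
  fixes M m c :: nat
  assumes "M \<ge> 1" "m < c"
  shows "(2*M*(2*M)^m + 1)^m < ((2*M)^m + 1)^c"
proof -
  define N where "N = (2*M)^m"
  have "(2*M*N + 1)^m \<le> (2*M*(N+1))^m" by (intro power_mono) (use assms in auto)
  also have "\<dots> = N * (N+1)^m" by (metis N_def power_mult_distrib)
  also have "\<dots> < (N+1)^(Suc m)" by simp
  also have "\<dots> \<le> (N+1)^c" by (rule power_increasing) (use assms in auto)
  finally show ?thesis by (simp add: N_def)
qed

text \<open>Siegel's lemma, by pigeonhole: the integer points of a large box \<open>[0,N]^n\<close> outnumber the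
  possible values of \<open>x \<mapsto> (b \<bullet> x)\<^sub>b\<^sub>\<in>\<^sub>B\<close>, so two of them differ by an orthogonal lattice vector.\<close>
lemma lattice_orthogonal_exists:
  fixes B :: "(real^'n) set"
  assumes "finite B" "B \<subseteq> lattice_pts" "card B < CARD('n)"
  obtains n where "n \<in> lattice_pts" "n \<noteq> 0" "\<And>b. b \<in> B \<Longrightarrow> b \<bullet> n = 0"
proof -
  obtain R where R: "\<And>b. b \<in> B \<Longrightarrow> norm b \<le> R"
    using finite_imp_bounded[OF assms(1)] bounded_iff by blast
  define K :: nat where "K = nat \<lceil>R\<rceil> + 1"
  have K: "\<bar>b $ i\<bar> \<le> real K" if "b \<in> B" for b i
    using component_le_norm_cart[of b i] R[OF that] unfolding K_def by linarith
  define M where "M = CARD('n) * K"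
  define N where "N = (2*M)^card B"
  define X :: "(real^'n) set" where "X = (\<lambda>f. \<chi> i. real (f i)) ` (UNIV \<rightarrow>\<^sub>E {0..N})"
  have "inj_on (\<lambda>f. \<chi> i. real (f i) :: real^'n) (UNIV \<rightarrow>\<^sub>E {0..N})"
    by (rule inj_onI) (auto simp: vec_eq_iff fun_eq_iff)
  then have card_X: "card X = (N+1)^CARD('n)" unfolding X_def by (simp add: card_image card_PiE)
  have X: "x \<in> lattice_pts" "0 \<le> x $ i" "x $ i \<le> real N" if "x \<in> X" for x i
    using that by (auto simp: X_def lattice_pts_def PiE_def Pi_def)
  define F where "F = (\<lambda>x::real^'n. restrict (\<lambda>b. \<lfloor>b \<bullet> x\<rfloor>) B)"
  define T where "T = B \<rightarrow>\<^sub>E {- int (M*N)..int (M*N)}"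
  have "\<lfloor>b \<bullet> x\<rfloor> \<in> {- int (M*N)..int (M*N)}" if "b \<in> B" "x \<in> X" for b x
  proof -
    have "\<bar>b \<bullet> x\<bar> \<le> real (M * N)"
      using abs_inner_le_box[of b "real K" x "real N"] K[OF that(1)] X[OF that(2)] by (simp add: M_def)
    then show ?thesis by (simp add: abs_le_iff floor_le_iff le_floor_iff)
  qed
  then have "F ` X \<subseteq> T" by (auto simp: F_def T_def)
  then have "card (F ` X) \<le> card T" by (intro card_mono) (auto simp: T_def assms(1) intro!: finite_PiE)
  also have "\<dots> = (2*M*N+1)^card B"
    by (simp add: T_def card_PiE assms(1) nat_add_distrib nat_mult_distrib mult.assoc)
  also have "\<dots> < card X"
    unfolding card_X N_def by (rule power_box_count_less) (use assms(3) in \<open>auto simp: M_def K_def\<close>)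
  finally have "\<not> inj_on F X" using card_image by fastforce
  then obtain x y where xy: "x \<in> X" "y \<in> X" "x \<noteq> y" "F x = F y" unfolding inj_on_def by blast
  show thesis
  proof (rule that)
    show "x - y \<in> lattice_pts" "x - y \<noteq> 0" using X(1) xy lattice_pts_diff by auto
    fix b assume b: "b \<in> B"
    have "\<lfloor>b \<bullet> x\<rfloor> = \<lfloor>b \<bullet> y\<rfloor>" using xy(4) b unfolding F_def by (metis restrict_apply')
    moreover have "b \<bullet> x \<in> \<int>" "b \<bullet> y \<in> \<int>" using assms(2) b X xy(1,2) inner_lattice_pts_Ints by blast+
    ultimately show "b \<bullet> (x - y) = 0" by (auto simp: inner_diff_right elim!: Ints_cases)
  qed
qed

lemma standard_simplex_affine_Ints:
  fixes C :: "(real^'n) set"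
  assumes "standard_simplex C" "\<And>v. v \<in> C \<Longrightarrow> v \<in> lattice_pts \<Longrightarrow> a \<bullet> v + b \<in> \<int>"
    and "z \<in> lattice_pts"
  shows "a \<bullet> z \<in> \<int>"
proof -
  obtain v0 V where V: "v0 \<in> lattice_pts" "V \<subseteq> lattice_pts" "C = convex hull (insert v0 V)"
    "\<forall>z\<in>lattice_pts. \<exists>c :: real^'n \<Rightarrow> int. z = (\<Sum>v\<in>V. of_int (c v) *\<^sub>R (v - v0))"
    using assms(1) unfolding standard_simplex_def by blast
  obtain c :: "real^'n \<Rightarrow> int" where c: "z = (\<Sum>v\<in>V. of_int (c v) *\<^sub>R (v - v0))"
    using V(4) assms(3) by blast
  have "insert v0 V \<subseteq> C" unfolding V(3) by (rule hull_subset)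
  then have vertex: "a \<bullet> v + b \<in> \<int>" if "v \<in> insert v0 V" for v
    using assms(2) that V(1,2) by blast
  have "a \<bullet> z = (\<Sum>v\<in>V. of_int (c v) * ((a \<bullet> v + b) - (a \<bullet> v0 + b)))"
    unfolding c by (simp add: inner_sum_right inner_diff_right)
  also have "\<dots> \<in> \<int>" using vertex by (intro Ints_sum Ints_mult Ints_diff) auto
  finally show ?thesis .
qed

section \<open>Convex geometry\<close>

lemma interior_min_inner_imp_zero:
  fixes w :: "'a::real_inner"
  assumes "x \<in> interior S" "\<And>y. y \<in> S \<Longrightarrow> w \<bullet> x \<le> w \<bullet> y"
  shows "w = 0"
proof (rule ccontr)
  assume "w \<noteq> 0"
  obtain e where e: "e > 0" "ball x e \<subseteq> S" using assms(1) mem_interior by blast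
  define y where "y = x - (e / 2 / norm w) *\<^sub>R w"
  have "dist x y = e / 2" using \<open>w \<noteq> 0\<close> e(1) by (simp add: y_def dist_norm)
  then have "w \<bullet> x \<le> w \<bullet> y" using e by (intro assms(2)) auto
  moreover have "w \<bullet> y = w \<bullet> x - e / 2 * norm w"
    using \<open>w \<noteq> 0\<close> by (simp add: y_def inner_diff_right power2_norm_eq_inner[symmetric] power2_eq_square)
  moreover have "e * norm w > 0" using e(1) \<open>w \<noteq> 0\<close> by simp
  ultimately show False by linarith
qed

lemma hyperplane_normal_parallel:
  fixes a n :: "'a::real_inner"
  assumes "a \<noteq> 0" "\<And>x. a \<bullet> x = b \<Longrightarrow> n \<bullet> x = k"
  shows "n = ((n \<bullet> a) / (a \<bullet> a)) *\<^sub>R a"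
proof -
  have aa: "a \<bullet> a \<noteq> 0" using assms(1) by simp
  define x0 where "x0 = (b / (a \<bullet> a)) *\<^sub>R a"
  define z where "z = n - ((n \<bullet> a) / (a \<bullet> a)) *\<^sub>R a"
  have x0: "a \<bullet> x0 = b" using aa by (simp add: x0_def)
  have az: "a \<bullet> z = 0" using aa by (simp add: z_def inner_diff_right inner_commute)
  have "a \<bullet> (x0 + z) = b" using x0 az by (simp add: inner_add_right)
  then have "n \<bullet> (x0 + z) = k" "n \<bullet> x0 = k" using x0 by (auto intro: assms(2))
  then have "n \<bullet> z = 0" by (simp add: inner_add_right)
  then have "z \<bullet> z = 0" using az by (simp add: z_def inner_diff_left)
  then show ?thesis by (simp add: z_def)
qed

text \<open>Support the upward closure of \<open>L\<close> at its boundary point \<open>(x, g)\<close>.\<close>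
lemma supporting_hyperplane_below_lowest_point:
  fixes L :: "('a::euclidean_space \<times> real) set"
  assumes "convex L" "(x, g) \<in> L" "\<And>t. (x, t) \<in> L \<Longrightarrow> g \<le> t"
  obtains w s where "(w, s) \<noteq> 0" "0 \<le> s" "\<And>q. q \<in> L \<Longrightarrow> w \<bullet> x + s * g \<le> w \<bullet> fst q + s * snd q"
proof -
  define E where "E = (\<Union>q\<in>L. \<Union>z\<in>{0} \<times> {0..}. {q + z})"
  have "convex E" unfolding E_def by (intro convex_sums assms(1) convex_Times) auto
  have E_iff: "p \<in> E \<longleftrightarrow> (\<exists>q\<in>L. \<exists>t\<ge>0. p = q + (0, t))" for p
    unfolding E_def by force
  have LE: "L \<subseteq> E" using E_iff by force
  have xg1: "(x, g + 1) \<in> E" using E_iff assms(2) by force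
  have "(x, g) \<notin> rel_interior E"
  proof
    assume "(x, g) \<in> rel_interior E"
    then obtain e where e: "e > 0" "ball (x, g) e \<inter> affine hull E \<subseteq> E"
      using mem_rel_interior_ball by blast
    define y where "y = (1 + e/2) *\<^sub>R (x, g) + (- e/2) *\<^sub>R (x, g + 1)"
    have y: "y = (x, g - e/2)" unfolding y_def by (simp add: algebra_simps)
    have "y \<in> affine hull E" unfolding y_def
      by (rule mem_affine[OF affine_affine_hull]) (use LE assms(2) xg1 hull_inc[of _ E] in auto)
    moreover have "y \<in> ball (x, g) e" using e(1) by (simp add: y dist_Pair_Pair)
    ultimately have "y \<in> E" using e(2) by blast
    then obtain q t where q: "q \<in> L" "t \<ge> 0" "(x, g - e/2) = q + (0, t)" using E_iff y by blast
    then have "q = (x, g - e/2 - t)" by (auto simp: prod_eq_iff)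
    then have "g \<le> g - e/2 - t" using assms(3) q(1) by blast
    then show False using e(1) q(2) by simp
  qed
  moreover have "(x, g) \<in> E" using LE assms(2) by blast
  ultimately obtain w' where w': "w' \<noteq> 0" "\<And>y. y \<in> E \<Longrightarrow> w' \<bullet> (x, g) \<le> w' \<bullet> y"
    using supporting_hyperplane_rel_boundary[OF \<open>convex E\<close>] by metis
  obtain w s where ws: "w' = (w, s)" by (cases w')
  show thesis
  proof (rule that)
    show "(w, s) \<noteq> 0" using w'(1) ws by simp
    show "0 \<le> s" using w'(2)[OF xg1] ws by (simp add: algebra_simps)
    fix q assume "q \<in> L"
    then show "w \<bullet> x + s * g \<le> w \<bullet> fst q + s * snd q" using w'(2) LE ws by (cases q) force
  qed
qed

text \<open>The supporting hyperplane at the lowest point of \<open>L\<close> above \<open>x\<close> cannot be vertical, as a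
  vertical one would support the shadow of \<open>L\<close> at its interior point \<open>x\<close>.\<close>
lemma lower_face_over_interior_point:
  fixes L :: "('a::euclidean_space \<times> real) set"
  assumes "compact L" "convex L" "x \<in> interior (fst ` L)"
  obtains u c where "\<And>q. q \<in> L \<Longrightarrow> c \<le> u \<bullet> fst q + snd q"
    "x \<in> fst ` {q \<in> L. u \<bullet> fst q + snd q = c}"
proof -
  define T where "T = snd ` (L \<inter> {q. fst q = x})"
  have "compact (L \<inter> {q. fst q = x})"
    by (intro compact_Int_closed assms(1) closed_Collect_eq continuous_intros)
  then have "compact T" unfolding T_def by (intro compact_continuous_image continuous_intros)
  moreover have "T \<noteq> {}"
  proof -
    obtain q where "q \<in> L" "fst q = x" using assms(3) interior_subset by blast
    then show ?thesis unfolding T_def by blast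
  qed
  ultimately obtain g where g: "g \<in> T" "\<And>t. t \<in> T \<Longrightarrow> g \<le> t"
    using compact_attains_inf[of T] by blast
  have xg: "(x, g) \<in> L" using g(1) unfolding T_def by force
  have "g \<le> t" if "(x, t) \<in> L" for t using g(2) that unfolding T_def by force
  then obtain w s where ws: "(w, s) \<noteq> 0" "0 \<le> s"
    "\<And>q. q \<in> L \<Longrightarrow> w \<bullet> x + s * g \<le> w \<bullet> fst q + s * snd q"
    using supporting_hyperplane_below_lowest_point[OF assms(2) xg] by blast
  have "s \<noteq> 0"
  proof
    assume "s = 0"
    then have "w \<bullet> x \<le> w \<bullet> m" if "m \<in> fst ` L" for m using that ws(3) by force
    then have "w = 0" by (rule interior_min_inner_imp_zero[OF assms(3)])
    then show False using ws(1) \<open>s = 0\<close> by (simp add: zero_prod_def)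
  qed
  with ws(2) have "s > 0" by simp
  show thesis
  proof (rule that)
    fix q assume "q \<in> L"
    then have "(w \<bullet> x + s * g) / s \<le> (w \<bullet> fst q + s * snd q) / s"
      using ws(3) \<open>s > 0\<close> by (simp add: divide_right_mono)
    then show "(1/s) *\<^sub>R w \<bullet> x + g \<le> (1/s) *\<^sub>R w \<bullet> fst q + snd q"
      using \<open>s > 0\<close> by (simp add: add_divide_distrib)
  next
    show "x \<in> fst ` {q \<in> L. (1/s) *\<^sub>R w \<bullet> fst q + snd q = (1/s) *\<^sub>R w \<bullet> x + g}"
      using xg by force
  qed
qed

lemma finite_closed_cover_interior:
  fixes W :: "'a::euclidean_space set"
  assumes "finite \<A>" "\<And>A. A \<in> \<A> \<Longrightarrow> closed A" "open W" "W \<noteq> {}" "W \<subseteq> \<Union>\<A>"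
  obtains A where "A \<in> \<A>" "interior A \<noteq> {}" "A \<inter> W \<noteq> {}"
proof -
  let ?\<A> = "{A \<in> \<A>. A \<inter> W \<noteq> {}}"
  have "W \<subseteq> interior (\<Union>?\<A>)" using assms(3,5) by (intro interior_maximal) auto
  moreover have "euclidean interior_of \<Union>?\<A> = {}" if "\<forall>A\<in>?\<A>. interior A = {}"
    using that assms(1,2)
    by (intro Baire_category_alt) (auto simp: completely_metrizable_space_euclidean countable_finite)
  ultimately show thesis using that assms(4) by auto
qed

lemma dim_shifted_graph_full:
  fixes N :: "'a::euclidean_space set" and f :: "'a \<Rightarrow> real"
  assumes "span N = UNIV" "\<nexists>p. \<forall>n\<in>N. n \<bullet> p + f n = 1"
  shows "dim ((\<lambda>n. (n, f n - 1)) ` N) = DIM('a \<times> real)"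
proof -
  define W where "W = (\<lambda>n. (n, f n - 1)) ` N"
  have "\<not> dim W < DIM('a \<times> real)"
  proof
    assume "dim W < DIM('a \<times> real)"
    then obtain a c where ac: "(a, c) \<noteq> 0" "span W \<subseteq> {q. (a, c) \<bullet> q = 0}"
      using lowdim_subset_hyperplane[of W] by (metis surj_pair)
    have ac_N: "a \<bullet> n = c * (1 - f n)" if "n \<in> N" for n
      using ac(2) span_base[of "(n, f n - 1)" W] that by (auto simp: W_def algebra_simps)
    show False
    proof (cases "c = 0")
      case True
      then have "span N \<subseteq> {x. a \<bullet> x = 0}" using ac_N by (intro span_minimal subspace_hyperplane) auto
      then have "a \<bullet> a = 0" using assms(1) by blast
      then show False using ac(1) True by (simp add: zero_prod_def)
    next
      case False
      then have "n \<bullet> ((1/c) *\<^sub>R a) + f n = 1" if "n \<in> N" for n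
        using ac_N[OF that] by (simp add: inner_commute)
      then show False using assms(2) by blast
    qed
  qed
  then show ?thesis using dim_subset_UNIV[of W] by (simp add: W_def)
qed

lemma dim_shifted_graph:
  fixes N :: "'a::euclidean_space set" and f :: "'a \<Rightarrow> real"
  assumes "span N = UNIV"
  shows "dim ((\<lambda>n. (n, f n - 1)) ` N) = (if \<exists>p. \<forall>n\<in>N. n \<bullet> p + f n = 1 then DIM('a) else DIM('a) + 1)"
proof (cases "\<exists>p. \<forall>n\<in>N. n \<bullet> p + f n = 1")
  case True
  define W where "W = (\<lambda>n. (n, f n - 1)) ` N"
  have "DIM('a) = dim N" using assms by (metis dim_UNIV dim_span)
  also have "dim N = dim (fst ` W)" by (simp add: W_def image_image)
  also have "\<dots> \<le> dim W" by (rule dim_image_le[OF linear_fst])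
  finally have lower: "DIM('a) \<le> dim W" .
  obtain p where p: "\<And>n. n \<in> N \<Longrightarrow> n \<bullet> p + f n = 1" using True by blast
  have "W \<subseteq> {q. (p, 1) \<bullet> q = 0}"
  proof
    fix q assume "q \<in> W"
    then obtain n where "n \<in> N" "q = (n, f n - 1)" by (auto simp: W_def)
    then show "q \<in> {q. (p, 1) \<bullet> q = 0}" using p[of n] by (simp add: inner_commute)
  qed
  moreover have "(p, 1::real) \<noteq> 0" by (simp add: zero_prod_def)
  ultimately have "dim W \<le> DIM('a \<times> real) - 1"
    using dim_subset dim_hyperplane by metis
  then show ?thesis using True lower by (simp add: W_def)
next
  case False
  then show ?thesis using dim_shifted_graph_full[OF assms] by simp
qed

lemma aff_dim_convex_hull_insert_graph:
  fixes N :: "'a::euclidean_space set" and f :: "'a \<Rightarrow> real"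
  assumes "span N = UNIV"
  shows "aff_dim (convex hull (insert (0, 1) ((\<lambda>n. (n, f n)) ` N))) =
    (if \<exists>p. \<forall>n\<in>N. n \<bullet> p + f n = 1 then DIM('a) else DIM('a) + 1)"
proof -
  let ?G = "(\<lambda>n. (n, f n)) ` N"
  have "aff_dim (convex hull (insert (0, 1) ?G)) = dim ((\<lambda>q. q - (0, 1)) ` insert (0, 1) ?G)"
    unfolding aff_dim_convex_hull by (rule aff_dim_eq_dim_subtract) (simp add: hull_inc)
  also have "(\<lambda>q. q - (0, 1)) ` insert (0, 1) ?G = insert 0 ((\<lambda>n. (n, f n - 1)) ` N)"
    by (auto simp: image_image zero_prod_def)
  also have "dim \<dots> = dim ((\<lambda>n. (n, f n - 1)) ` N)" by (simp add: dim_insert span_zero)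
  finally show ?thesis using dim_shifted_graph[OF assms, of f] by simp
qed

lemma aff_dim_pos_imp_distinct_points:
  fixes S :: "'a::euclidean_space set"
  assumes "0 < aff_dim S"
  obtains x y where "x \<in> S" "y \<in> S" "x \<noteq> y"
proof (rule ccontr)
  assume "\<not> thesis"
  then have "S = {} \<or> (\<exists>a. S = {a})" using that by blast
  then show False using assms by auto
qed

lemma bounded_ray_imp_zero:
  fixes x :: "'a::real_normed_vector"
  assumes "bounded S" "\<And>t. t \<ge> 0 \<Longrightarrow> y + t *\<^sub>R x \<in> S"
  shows "x = 0"
proof (rule ccontr)
  assume "x \<noteq> 0"
  obtain R where R: "\<And>z. z \<in> S \<Longrightarrow> norm z \<le> R" using assms(1) bounded_iff by blast
  define t where "t = (R + norm y + 1) / norm x"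
  have "norm y \<le> R" using R[OF assms(2)[of 0]] by simp
  then have "R + norm y + 1 > 0" using norm_ge_zero[of y] by linarith
  then have "t \<ge> 0" "norm (t *\<^sub>R x) = R + norm y + 1" using \<open>x \<noteq> 0\<close> by (auto simp: t_def)
  moreover have "norm (t *\<^sub>R x) \<le> norm (y + t *\<^sub>R x) + norm y"
    by (metis add_diff_cancel_left' norm_triangle_ineq4 add.commute)
  ultimately show False using R[OF assms(2)[of t]] by linarith
qed

section \<open>Full-dimensional lattice polytopes\<close>

definition facet_normals :: "(real^'n) set \<Rightarrow> (real^'n) set" where
  "facet_normals P = {n. \<exists>\<tau>. codim1_face \<tau> P \<and> inward_normal P \<tau> n}"

lemma check_Delta0_eq:
  "check_Delta0 P = convex hull (insert (0, 1) ((\<lambda>n. (n, phiP P n)) ` facet_normals P))"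
  unfolding check_Delta0_def facet_normals_def
  by (rule arg_cong[where f = "\<lambda>S. convex hull (insert (0, 1) S)"]) auto

locale full_lattice_polytope =
  fixes P :: "(real^'n) set"
  assumes lattice_polytope: "lattice_polytope P"
    and aff_dim_P: "aff_dim P = CARD('n)"
begin

lemma compact_P: "compact P"
  using lattice_polytope finite_imp_compact_convex_hull unfolding lattice_polytope_def by blast

lemma convex_P: "convex P"
  using lattice_polytope convex_convex_hull unfolding lattice_polytope_def by metis

lemma bounded_P: "bounded P"
  using compact_P compact_imp_bounded by blast

lemma P_nonempty: "P \<noteq> {}"
  using aff_dim_P by auto

lemma affine_hull_P: "affine hull P = UNIV"
  using aff_dim_eq_full[of P] aff_dim_P by simp

lemma finite_lattice_pts_P: "finite (P \<inter> lattice_pts)"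
  using bounded_P by (rule finite_bounded_Int_lattice_pts)

lemma convex_hull_lattice_pts_P: "convex hull (P \<inter> lattice_pts) = P"
proof -
  obtain S where S: "S \<subseteq> lattice_pts" "P = convex hull S"
    using lattice_polytope unfolding lattice_polytope_def by blast
  have "S \<subseteq> P" unfolding S(2) by (rule hull_subset)
  then have "S \<subseteq> P \<inter> lattice_pts" using S(1) by blast
  then have "P \<subseteq> convex hull (P \<inter> lattice_pts)" using S(2) hull_mono by blast
  moreover have "convex hull (P \<inter> lattice_pts) \<subseteq> P" using convex_P by (simp add: hull_minimal)
  ultimately show ?thesis by blast
qed

lemma polytope_P: "polytope P"
  using convex_hull_lattice_pts_P finite_lattice_pts_P polytope_def by metis

lemma face_convex_hull_lattice_pts:
  assumes "F face_of P"
  obtains S where "S \<subseteq> lattice_pts" "finite S" "F = convex hull S"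
proof -
  have "F face_of convex hull (P \<inter> lattice_pts)" using assms convex_hull_lattice_pts_P by simp
  then obtain S where "S \<subseteq> P \<inter> lattice_pts" "F = convex hull S"
    by (rule face_of_convex_hull_subset[OF finite_imp_compact[OF finite_lattice_pts_P]])
  then show thesis using that finite_lattice_pts_P finite_subset by blast
qed

lemma codim1_face_iff_facet_of: "codim1_face \<tau> P \<longleftrightarrow> \<tau> facet_of P"
  unfolding codim1_face_def facet_of_def using aff_dim_P by auto

lemma bdd_below_inner_image: "bdd_below ((\<bullet>) n ` P)"
  using bounded_linear_image[OF bounded_P bounded_linear_inner_right] by (rule bounded_imp_bdd_below)

lemma phiP_le: "m \<in> P \<Longrightarrow> - phiP P n \<le> n \<bullet> m"
  unfolding phiP_def using bdd_below_inner_image by (simp add: cINF_lower)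

lemma phiP_eqI:
  assumes "\<And>m. m \<in> P \<Longrightarrow> c \<le> n \<bullet> m" "m0 \<in> P" "n \<bullet> m0 = c"
  shows "- phiP P n = c"
proof -
  have "(INF m\<in>P. n \<bullet> m) \<le> c" using assms(2,3) bdd_below_inner_image by (metis cINF_lower)
  moreover have "c \<le> (INF m\<in>P. n \<bullet> m)" using assms(1) P_nonempty by (simp add: cINF_greatest)
  ultimately show ?thesis unfolding phiP_def by simp
qed

lemma phiP_less_interior:
  assumes "m \<in> interior P" "n \<noteq> 0"
  shows "- phiP P n < n \<bullet> m"
proof (rule ccontr)
  assume "\<not> - phiP P n < n \<bullet> m"
  then have "n \<bullet> m \<le> n \<bullet> y" if "y \<in> P" for y using phiP_le[OF that, of n] by linarith
  then have "n = 0" by (rule interior_min_inner_imp_zero[OF assms(1)])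
  then show False using assms(2) by simp
qed

lemma facet_normal_lattice_pt:
  assumes "n \<in> facet_normals P"
  shows "n \<in> lattice_pts" "n \<noteq> 0"
  using assms by (auto simp: facet_normals_def inward_normal_def primitive_vec_def)

lemma phiP_facet_normal_Ints:
  assumes "n \<in> facet_normals P"
  shows "phiP P n \<in> \<int>"
proof -
  obtain \<tau> where \<tau>: "\<tau> facet_of P" "inward_normal P \<tau> n"
    using assms codim1_face_iff_facet_of by (auto simp: facet_normals_def)
  obtain S where S: "S \<subseteq> lattice_pts" "\<tau> = convex hull S"
    using face_convex_hull_lattice_pts[OF facet_of_imp_face_of[OF \<tau>(1)]] by blast
  then obtain w where "w \<in> S" using \<tau>(1) by (auto simp: facet_of_def)
  then have "w \<in> \<tau>" unfolding S(2) by (rule hull_inc)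
  then have "phiP P n = - (n \<bullet> w)" using \<tau>(2) by (auto simp: inward_normal_def)
  then show ?thesis using inner_lattice_pts_Ints facet_normal_lattice_pt[OF assms] S(1) \<open>w \<in> S\<close> by auto
qed

lemma lattice_distance_ge_1:
  assumes "n \<in> facet_normals P" "m \<in> interior P" "m \<in> lattice_pts"
  shows "1 \<le> n \<bullet> m + phiP P n"
  using Ints_less_imp_add_1_le[of "- phiP P n" "n \<bullet> m"] phiP_less_interior[OF assms(2)]
    facet_normal_lattice_pt[OF assms(1)] phiP_facet_normal_Ints[OF assms(1)]
    inner_lattice_pts_Ints[of n m] assms(3) by auto

text \<open>A facet is the hull of lattice points spanning a hyperplane, so Siegel's lemma yields a
  nonzero lattice vector orthogonal to it.\<close>
lemma facet_orthogonal_lattice_vector: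
  assumes G: "G facet_of P"
  obtains n0 c where "n0 \<in> lattice_pts" "n0 \<noteq> 0" "affine hull G \<subseteq> {x. n0 \<bullet> x = c}"
proof -
  obtain S where S: "S \<subseteq> lattice_pts" "finite S" "G = convex hull S"
    by (rule face_convex_hull_lattice_pts[OF facet_of_imp_face_of[OF G]])
  have "S \<noteq> {}" using G unfolding S(3) by (auto simp: facet_of_def)
  then obtain w0 where w0: "w0 \<in> S" by blast
  define U where "U = (\<lambda>w. w - w0) ` S"
  have U: "U \<subseteq> lattice_pts" "finite U"
    using S(1,2) w0 by (auto simp: U_def intro: lattice_pts_diff)
  have "aff_dim S = int (dim U)"
    unfolding U_def by (rule aff_dim_eq_dim_subtract) (rule hull_inc[OF w0])
  moreover have "aff_dim G = int CARD('n) - 1" using G aff_dim_P by (simp add: facet_of_def)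
  ultimately have "dim U = CARD('n) - 1" using S(3) by (simp add: aff_dim_convex_hull)
  moreover obtain B where B: "B \<subseteq> U" "independent B" "U \<subseteq> span B" "card B = dim U"
    by (rule basis_exists)
  ultimately have "card B < CARD('n)" by simp
  moreover have "finite B" "B \<subseteq> lattice_pts" using B(1) U finite_subset by auto
  ultimately obtain n0 where n0: "n0 \<in> lattice_pts" "n0 \<noteq> 0" "\<And>u. u \<in> B \<Longrightarrow> u \<bullet> n0 = 0"
    using lattice_orthogonal_exists by blast
  have "n0 \<bullet> u = 0" if "u \<in> U" for u
    using orthogonal_to_span[of u B n0] B(3) n0(3) that by (auto simp: orthogonal_def inner_commute)
  then have "n0 \<bullet> x = n0 \<bullet> w0" if "x \<in> S" for x
    using that by (force simp: U_def inner_diff_right)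
  then have "S \<subseteq> {x. n0 \<bullet> x = n0 \<bullet> w0}" by blast
  then have "affine hull S \<subseteq> {x. n0 \<bullet> x = n0 \<bullet> w0}" by (simp add: hull_minimal affine_hyperplane)
  moreover have "affine hull G = affine hull S" unfolding S(3) by (rule affine_hull_convex_hull)
  ultimately show thesis using that n0(1,2) by auto
qed

lemma facet_lattice_normal:
  assumes G: "G facet_of P" and a: "a \<noteq> 0" "G = P \<inter> {x. a \<bullet> x = b}"
  obtains n0 where "n0 \<in> lattice_pts" "n0 \<noteq> 0" "n0 = ((n0 \<bullet> a) / (a \<bullet> a)) *\<^sub>R a"
proof -
  obtain n0 c where n0: "n0 \<in> lattice_pts" "n0 \<noteq> 0" "affine hull G \<subseteq> {x. n0 \<bullet> x = c}"
    by (rule facet_orthogonal_lattice_vector[OF G])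
  have "affine hull G = {x. a \<bullet> x = b}"
  proof (rule affine_dim_equal)
    show "affine hull G \<subseteq> {x. a \<bullet> x = b}" using a(2) by (simp add: hull_minimal affine_hyperplane)
    have "aff_dim G = int CARD('n) - 1" using G aff_dim_P by (simp add: facet_of_def)
    then show "aff_dim (affine hull G) = aff_dim {x. a \<bullet> x = b}" using a(1) by simp
  qed (use G in \<open>auto simp: facet_of_def affine_hyperplane\<close>)
  then have "n0 = ((n0 \<bullet> a) / (a \<bullet> a)) *\<^sub>R a"
    using n0(3) by (intro hyperplane_normal_parallel[OF a(1)]) blast
  then show thesis using that n0(1,2) by blast
qed

lemma facet_inward_normal:
  assumes G: "G facet_of P" and a: "a \<noteq> 0" "P \<subseteq> {x. a \<bullet> x \<le> b}" "G = P \<inter> {x. a \<bullet> x = b}"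
  obtains n \<gamma> where "inward_normal P G n" "\<gamma> < 0" "n = \<gamma> *\<^sub>R a"
proof -
  obtain n0 where n0: "n0 \<in> lattice_pts" "n0 \<noteq> 0" "n0 = ((n0 \<bullet> a) / (a \<bullet> a)) *\<^sub>R a"
    using facet_lattice_normal[OF G a(1,3)] by blast
  define \<beta> where "\<beta> = (n0 \<bullet> a) / (a \<bullet> a)"
  obtain k z where kz: "k > (0::nat)" "primitive_vec z" "n0 = real k *\<^sub>R z"
    using lattice_pt_primitive_multiple[OF n0(1,2)] by blast
  have z: "z = (\<beta> / real k) *\<^sub>R a" using kz(1,3) n0(3) unfolding \<beta>_def
    by (metis (no_types, lifting) divide_inverse_commute of_nat_0_less_iff order_less_irrefl
        scaleR_scaleR vector_fraction_eq_iff)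
  have "\<beta> \<noteq> 0" using n0(2,3) \<beta>_def by force
  obtain n \<gamma> where n: "primitive_vec n" "\<gamma> < 0" "n = \<gamma> *\<^sub>R a"
  proof (cases "\<beta> < 0")
    case True
    then show thesis using that[of z "\<beta> / real k"] kz z by (simp add: divide_neg_pos)
  next
    case False
    then have "\<beta> > 0" using \<open>\<beta> \<noteq> 0\<close> by simp
    then show thesis using that[of "- z" "- (\<beta> / real k)"] primitive_vec_uminus[OF kz(2)] kz z by simp
  qed
  obtain g where g: "g \<in> P" "a \<bullet> g = b" using G a(3) by (auto simp: facet_of_def)
  have "\<gamma> * b \<le> n \<bullet> m" if "m \<in> P" for m
  proof -
    have "a \<bullet> m \<le> b" using a(2) that by blast
    then show ?thesis using n(2,3) by (simp add: mult_left_mono_neg)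
  qed
  moreover have "n \<bullet> g = \<gamma> * b" using g(2) n(3) by simp
  ultimately have phi: "- phiP P n = \<gamma> * b" by (rule phiP_eqI[OF _ g(1)])
  have "inward_normal P G n"
    unfolding inward_normal_def using n(1) phiP_le a(2,3) phi n(2,3) by auto
  then show thesis using that n(2,3) by blast
qed

text \<open>A bounded polytope has no recession direction, and the halfspaces of an irredundant
  description of \<open>P\<close> are bounded by facets.\<close>
lemma facet_normals_nonneg_imp_zero:
  assumes "\<And>n. n \<in> facet_normals P \<Longrightarrow> 0 \<le> n \<bullet> x"
  shows "x = 0"
proof -
  have "polyhedron P" using polytope_P by (rule polytope_imp_polyhedron)
  then obtain \<F> where \<F>: "finite \<F>" "P = affine hull P \<inter> \<Inter>\<F>"
    "\<forall>h\<in>\<F>. \<exists>a b. a \<noteq> 0 \<and> h = {x. a \<bullet> x \<le> b}"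
    "\<forall>\<F>'. \<F>' \<subset> \<F> \<longrightarrow> P \<subset> affine hull P \<inter> \<Inter>\<F>'"
    unfolding polyhedron_Int_affine_minimal by blast
  then obtain a b where ab: "\<And>h. h \<in> \<F> \<Longrightarrow> a h \<noteq> 0 \<and> h = {x. a h \<bullet> x \<le> b h}" by metis
  have P_halfspace: "P \<subseteq> {x. a h \<bullet> x \<le> b h}" if "h \<in> \<F>" for h
    using \<F>(2) ab that by blast
  have a_x: "a h \<bullet> x \<le> 0" if h: "h \<in> \<F>" for h
  proof -
    have facet: "(P \<inter> {x. a h \<bullet> x = b h}) facet_of P"
      using facet_of_polyhedron_explicit[OF \<F>(1,2) ab] \<F>(4) h by blast
    then obtain n \<gamma> where n: "inward_normal P (P \<inter> {x. a h \<bullet> x = b h}) n" "\<gamma> < 0" "n = \<gamma> *\<^sub>R a h"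
      using facet_inward_normal P_halfspace[OF h] ab[OF h] by blast
    then have "n \<in> facet_normals P"
      using facet codim1_face_iff_facet_of by (auto simp: facet_normals_def)
    from assms[OF this] have "0 \<le> \<gamma> * (a h \<bullet> x)" using n(3) by simp
    then show ?thesis using n(2) by (simp add: zero_le_mult_iff)
  qed
  obtain y where y: "y \<in> P" using P_nonempty by blast
  have "y + t *\<^sub>R x \<in> P" if "t \<ge> 0" for t
  proof -
    have "a h \<bullet> (y + t *\<^sub>R x) \<le> b h" if h: "h \<in> \<F>" for h
    proof -
      have "t * (a h \<bullet> x) \<le> 0" using a_x[OF h] \<open>t \<ge> 0\<close> by (simp add: mult_nonneg_nonpos)
      then show ?thesis using P_halfspace[OF h] y by (auto simp: inner_add_right)
    qed
    then show ?thesis using \<F>(2) ab affine_hull_P by blast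
  qed
  then show "x = 0" by (rule bounded_ray_imp_zero[OF bounded_P])
qed

lemma span_facet_normals: "span (facet_normals P) = UNIV"
proof (rule ccontr)
  assume "span (facet_normals P) \<noteq> UNIV"
  then obtain a where a: "a \<noteq> 0" "span (facet_normals P) \<subseteq> {x. a \<bullet> x = 0}"
    using span_not_univ_subset_hyperplane by blast
  have "0 \<le> n \<bullet> a" if "n \<in> facet_normals P" for n
    using a(2) span_base[OF that] by (auto simp: inner_commute)
  then have "a = 0" by (rule facet_normals_nonneg_imp_zero)
  then show False using a(1) by simp
qed

lemma interior_lattice_pt_unique:
  assumes "\<And>n. n \<in> facet_normals P \<Longrightarrow> n \<bullet> p + phiP P n = 1"
    and "m \<in> interior P" "m \<in> lattice_pts"
  shows "m = p"
proof -
  have "0 \<le> n \<bullet> (m - p)" if "n \<in> facet_normals P" for n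
    using lattice_distance_ge_1[OF that assms(2,3)] assms(1)[OF that] unfolding inner_diff_right
    by linarith
  then show ?thesis using facet_normals_nonneg_imp_zero by force
qed

lemma aff_dim_check_Delta0:
  "aff_dim (check_Delta0 P) =
    (if \<exists>p. \<forall>n\<in>facet_normals P. n \<bullet> p + phiP P n = 1 then CARD('n) else CARD('n) + 1)"
  using aff_dim_convex_hull_insert_graph[OF span_facet_normals] by (simp add: check_Delta0_eq)

lemma aff_dim_check_Delta0_two_interior_lattice_pts:
  assumes "m1 \<in> interior P" "m1 \<in> lattice_pts" "m2 \<in> interior P" "m2 \<in> lattice_pts" "m1 \<noteq> m2"
  shows "aff_dim (check_Delta0 P) = CARD('n) + 1"
proof -
  have "\<nexists>p. \<forall>n\<in>facet_normals P. n \<bullet> p + phiP P n = 1"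
  proof
    assume "\<exists>p. \<forall>n\<in>facet_normals P. n \<bullet> p + phiP P n = 1"
    then obtain p where p: "\<And>n. n \<in> facet_normals P \<Longrightarrow> n \<bullet> p + phiP P n = 1" by blast
    have "m1 = p" "m2 = p" using interior_lattice_pt_unique[OF p] assms(1-4) by blast+
    then show False using assms(5) by simp
  qed
  then show ?thesis using aff_dim_check_Delta0 by simp
qed

lemma lifted_eq_convex_hull_image:
  "lifted P h = convex hull ((\<lambda>m. (m, h m)) ` (P \<inter> lattice_pts))"
  unfolding lifted_def by (rule arg_cong[where f = "(hull) convex"]) auto

lemma polytope_lifted: "polytope (lifted P h)"
  unfolding lifted_eq_convex_hull_image using finite_lattice_pts_P by (simp add: polytope_convex_hull)

lemma compact_lifted: "compact (lifted P h)"
  using polytope_lifted polytope_imp_compact by blast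

lemma convex_lifted: "convex (lifted P h)"
  using polytope_lifted polytope_imp_convex by blast

lemma fst_lifted: "fst ` lifted P h = P"
proof -
  have "fst ` lifted P h = convex hull (fst ` (\<lambda>m. (m, h m)) ` (P \<inter> lattice_pts))"
    unfolding lifted_eq_convex_hull_image by (simp add: convex_hull_linear_image linear_fst)
  then show ?thesis using convex_hull_lattice_pts_P by (simp add: image_image)
qed

lemma lower_cell_face:
  assumes "C \<in> lower_cells P h"
  obtains F where "F face_of lifted P h" "C = fst ` F"
proof -
  obtain u c where uc: "\<forall>q\<in>lifted P h. c \<le> u \<bullet> fst q + snd q"
    "C = fst ` {q\<in>lifted P h. u \<bullet> fst q + snd q = c}"
    using assms unfolding lower_cells_def by blast
  have "{q\<in>lifted P h. u \<bullet> fst q + snd q = c} = lifted P h \<inter> {q. (u, 1::real) \<bullet> q = c}"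
    by (auto simp: inner_prod_def)
  moreover have "(lifted P h \<inter> {q. (u, 1::real) \<bullet> q = c}) face_of lifted P h"
    using uc(1) by (intro face_of_Int_supporting_hyperplane_ge convex_lifted) (auto simp: inner_prod_def)
  ultimately show thesis using that uc(2) by auto
qed

lemma finite_lower_cells: "finite (lower_cells P h)"
proof -
  have "lower_cells P h \<subseteq> (\<lambda>F. fst ` F) ` {F. F face_of lifted P h}"
  proof
    fix C assume "C \<in> lower_cells P h"
    then obtain F where "F face_of lifted P h" "C = fst ` F" by (rule lower_cell_face)
    then show "C \<in> (\<lambda>F. fst ` F) ` {F. F face_of lifted P h}" by (intro rev_image_eqI[of F]) auto
  qed
  moreover have "finite {F. F face_of lifted P h}" by (rule finite_polytope_faces[OF polytope_lifted])
  ultimately show ?thesis using finite_surj by blast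
qed

lemma closed_lower_cell:
  assumes "C \<in> lower_cells P h"
  shows "closed C"
proof -
  obtain F where F: "F face_of lifted P h" "C = fst ` F" using assms by (rule lower_cell_face)
  then have "compact F" by (intro face_of_imp_compact[OF convex_lifted compact_lifted])
  then have "compact (fst ` F)" by (intro compact_continuous_image continuous_intros)
  then show ?thesis unfolding F(2) by (rule compact_imp_closed)
qed

lemma lower_cells_cover_interior:
  assumes "x \<in> interior P"
  obtains C where "C \<in> lower_cells P h" "x \<in> C"
proof -
  have "x \<in> interior (fst ` lifted P h)" using assms fst_lifted by simp
  then obtain u c where uc: "\<And>q. q \<in> lifted P h \<Longrightarrow> c \<le> u \<bullet> fst q + snd q"
    "x \<in> fst ` {q \<in> lifted P h. u \<bullet> fst q + snd q = c}"
    by (rule lower_face_over_interior_point[OF compact_lifted convex_lifted]) blast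
  then have "fst ` {q \<in> lifted P h. u \<bullet> fst q + snd q = c} \<in> lower_cells P h"
    unfolding lower_cells_def by blast
  then show thesis using that uc(2) by blast
qed

lemma full_dim_lower_cell_meets_open:
  assumes "open W" "W \<noteq> {}" "W \<subseteq> interior P"
  obtains C where "C \<in> lower_cells P h" "aff_dim C = aff_dim P" "C \<inter> W \<noteq> {}"
proof -
  have cover: "W \<subseteq> \<Union>(lower_cells P h)"
  proof
    fix x assume "x \<in> W"
    then obtain C where "C \<in> lower_cells P h" "x \<in> C"
      using assms(3) lower_cells_cover_interior by blast
    then show "x \<in> \<Union>(lower_cells P h)" by blast
  qed
  obtain C where C: "C \<in> lower_cells P h" "interior C \<noteq> {}" "C \<inter> W \<noteq> {}"
    using finite_lower_cells closed_lower_cell assms(1,2) cover by (rule finite_closed_cover_interior)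
  then have "aff_dim C = aff_dim P" using low_dim_interior[of C] aff_dim_P by auto
  then show thesis using that C by blast
qed

end

section \<open>Lattice polytopes with a single interior lattice point\<close>

locale lattice_polytope_one_interior_pt = full_lattice_polytope +
  fixes m0 :: "real^'n"
  assumes interior_lattice_pts_P: "interior P \<inter> lattice_pts = {m0}"
begin

lemma m0_interior: "m0 \<in> interior P" and m0_lattice: "m0 \<in> lattice_pts"
  using interior_lattice_pts_P by auto

lemma m0_in_P: "m0 \<in> P"
  using m0_interior interior_subset by blast

text \<open>The vertices of \<open>P\<close> are lattice points on the boundary, so \<open>h_star\<close> lifts the whole
  of \<open>P\<close> to height 0 and only \<open>m0\<close> to \<open>-1\<close>: the lifted polytope is a pyramid with apex \<open>(m0, -1)\<close>.\<close>
lemma lifted_h_star_eq: "lifted P (h_star P) = convex hull (insert (m0, -1) ((\<lambda>y. (y, 0)) ` P))"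
proof
  have "(m, h_star P m) \<in> insert (m0, -1) ((\<lambda>y. (y, 0)) ` P)" if "m \<in> P \<inter> lattice_pts" for m
  proof (cases "m \<in> interior P")
    case True
    then have "m = m0" using interior_lattice_pts_P that by blast
    then show ?thesis using True by (simp add: h_star_def)
  next
    case False
    then show ?thesis using that by (auto simp: h_star_def)
  qed
  then have "(\<lambda>m. (m, h_star P m)) ` (P \<inter> lattice_pts) \<subseteq> insert (m0, -1) ((\<lambda>y. (y, 0)) ` P)"
    by blast
  then show "lifted P (h_star P) \<subseteq> convex hull (insert (m0, -1) ((\<lambda>y. (y, 0)) ` P))"
    unfolding lifted_eq_convex_hull_image by (rule hull_mono)
next
  let ?V = "{v. v extreme_point_of P}"
  have "v \<in> P \<inter> lattice_pts" if "v extreme_point_of P" for v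
    using extreme_point_of_convex_hull[of v "P \<inter> lattice_pts"] that convex_hull_lattice_pts_P by simp
  then have "?V \<subseteq> P \<inter> lattice_pts" by blast
  moreover have "?V \<inter> interior P = {}" using extreme_point_not_in_interior by blast
  ultimately have "(\<lambda>y. (y, 0)) ` ?V \<subseteq> (\<lambda>m. (m, h_star P m)) ` (P \<inter> lattice_pts)"
    by (force simp: h_star_def)
  also have "\<dots> \<subseteq> lifted P (h_star P)" unfolding lifted_eq_convex_hull_image by (rule hull_subset)
  finally have "convex hull ((\<lambda>y. (y, 0::real)) ` ?V) \<subseteq> lifted P (h_star P)"
    by (simp add: hull_minimal convex_lifted)
  moreover have "convex hull ?V = P"
    using Krein_Milman_polytope[OF finite_lattice_pts_P] convex_hull_lattice_pts_P by simp
  moreover have "linear (\<lambda>y::real^'n. (y, 0::real))" by (intro linearI) auto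
  ultimately have "(\<lambda>y. (y, 0)) ` P \<subseteq> lifted P (h_star P)" by (metis convex_hull_linear_image)
  moreover have "(m0, -1) \<in> lifted P (h_star P)"
    unfolding lifted_eq_convex_hull_image using m0_interior m0_in_P m0_lattice
    by (intro hull_inc) (auto simp: h_star_def)
  ultimately show "convex hull (insert (m0, -1) ((\<lambda>y. (y, 0)) ` P)) \<subseteq> lifted P (h_star P)"
    by (simp add: hull_minimal convex_lifted)
qed

lemma lifted_h_star_iff:
  "q \<in> lifted P (h_star P) \<longleftrightarrow> (\<exists>l y. 0 \<le> l \<and> l \<le> 1 \<and> y \<in> P \<and> q = (l *\<^sub>R m0 + (1 - l) *\<^sub>R y, - l))"
proof -
  have "linear (\<lambda>y::real^'n. (y, 0::real))" by (intro linearI) auto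
  then have "convex ((\<lambda>y. (y, 0::real)) ` P)" using convex_P by (rule convex_linear_image)
  then have hull: "convex hull ((\<lambda>y. (y, 0::real)) ` P) = (\<lambda>y. (y, 0)) ` P"
    by (rule convex_hull_eq[THEN iffD2])
  have ne: "(\<lambda>y. (y, 0::real)) ` P \<noteq> {}" using P_nonempty by simp
  have "q \<in> lifted P (h_star P) \<longleftrightarrow> (\<exists>u\<ge>0. \<exists>v\<ge>0. \<exists>b. u + v = 1 \<and> b \<in> (\<lambda>y. (y, 0)) ` P \<and>
      q = u *\<^sub>R (m0, -1) + v *\<^sub>R b)"
    unfolding lifted_h_star_eq convex_hull_insert[OF ne] hull mem_Collect_eq by (rule refl)
  also have "\<dots> \<longleftrightarrow> (\<exists>l y. 0 \<le> l \<and> l \<le> 1 \<and> y \<in> P \<and> q = (l *\<^sub>R m0 + (1 - l) *\<^sub>R y, - l))"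
  proof
    assume "\<exists>u\<ge>0. \<exists>v\<ge>0. \<exists>b. u + v = 1 \<and> b \<in> (\<lambda>y. (y, 0)) ` P \<and> q = u *\<^sub>R (m0, -1) + v *\<^sub>R b"
    then obtain u v y where "0 \<le> u" "0 \<le> v" "u + v = 1" "y \<in> P" "q = u *\<^sub>R (m0, -1) + v *\<^sub>R (y, 0)"
      by blast
    then show "\<exists>l y. 0 \<le> l \<and> l \<le> 1 \<and> y \<in> P \<and> q = (l *\<^sub>R m0 + (1 - l) *\<^sub>R y, - l)"
      by (intro exI[of _ u] exI[of _ y]) (auto simp: eq_diff_eq')
  next
    assume "\<exists>l y. 0 \<le> l \<and> l \<le> 1 \<and> y \<in> P \<and> q = (l *\<^sub>R m0 + (1 - l) *\<^sub>R y, - l)"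
    then obtain l y where "0 \<le> l" "l \<le> 1" "y \<in> P" "q = l *\<^sub>R (m0, -1) + (1 - l) *\<^sub>R (y, 0)" by auto
    moreover have "0 \<le> 1 - l" "l + (1 - l) = 1" using \<open>l \<le> 1\<close> by simp_all
    ultimately show "\<exists>u\<ge>0. \<exists>v\<ge>0. \<exists>b. u + v = 1 \<and> b \<in> (\<lambda>y. (y, 0)) ` P \<and> q = u *\<^sub>R (m0, -1) + v *\<^sub>R b"
      by blast
  qed
  finally show ?thesis .
qed

context
  fixes \<tau> n
  assumes facet: "codim1_face \<tau> P" and normal: "inward_normal P \<tau> n"
begin

lemma normal_in_facet_normals: "n \<in> facet_normals P"
  using facet normal by (auto simp: facet_normals_def)

lemma lattice_distance_m0_ge_1: "1 \<le> n \<bullet> m0 + phiP P n"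
  by (rule lattice_distance_ge_1[OF normal_in_facet_normals m0_interior m0_lattice])

lemma facet_subset: "\<tau> \<subseteq> P" and convex_facet: "convex \<tau>" and facet_nonempty: "\<tau> \<noteq> {}"
  using facet face_of_imp_subset face_of_imp_convex codim1_face_iff_facet_of
  by (auto simp: facet_of_def)

lemma inner_facet: "y \<in> \<tau> \<Longrightarrow> n \<bullet> y = - phiP P n"
  using normal by (auto simp: inward_normal_def)

text \<open>The graph of the affine function vanishing on \<open>\<tau>\<close> and equal to \<open>-1\<close> at \<open>m0\<close> supports
  the lifted polytope from below along the pyramid over \<open>\<tau>\<close>.\<close>
lemma lifted_h_star_above_pyramid:
  assumes "q \<in> lifted P (h_star P)"
  shows "- (n \<bullet> fst q + phiP P n) / (n \<bullet> m0 + phiP P n) \<le> snd q"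
proof -
  obtain l y where ly: "0 \<le> l" "l \<le> 1" "y \<in> P" "q = (l *\<^sub>R m0 + (1 - l) *\<^sub>R y, - l)"
    using assms lifted_h_star_iff by blast
  have "n \<bullet> fst q + phiP P n = l * (n \<bullet> m0 + phiP P n) + (1 - l) * (n \<bullet> y + phiP P n)"
    using ly(4) by (simp add: inner_add_right algebra_simps)
  moreover have "0 \<le> (1 - l) * (n \<bullet> y + phiP P n)" using ly(2) phiP_le[OF ly(3), of n] by simp
  ultimately have "l \<le> (n \<bullet> fst q + phiP P n) / (n \<bullet> m0 + phiP P n)"
    using lattice_distance_m0_ge_1 by (simp add: le_divide_eq)
  moreover have "snd q = - l" using ly(4) by simp
  ultimately have "- ((n \<bullet> fst q + phiP P n) / (n \<bullet> m0 + phiP P n)) \<le> snd q" by linarith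
  then show ?thesis by (simp only: minus_divide_left)
qed

lemma pyramid_graph_in_lifted_h_star:
  assumes "x \<in> convex hull (insert m0 \<tau>)"
  shows "(x, - (n \<bullet> x + phiP P n) / (n \<bullet> m0 + phiP P n)) \<in> lifted P (h_star P)"
proof -
  have "convex hull \<tau> = \<tau>" using convex_facet by (rule convex_hull_eq[THEN iffD2])
  then obtain l v y where "0 \<le> l" "0 \<le> v" "l + v = 1" "y \<in> \<tau>" "x = l *\<^sub>R m0 + v *\<^sub>R y"
    using assms convex_hull_insert[OF facet_nonempty] by auto
  moreover from \<open>l + v = 1\<close> have "v = 1 - l" by simp
  ultimately have ly: "0 \<le> l" "l \<le> 1" "y \<in> \<tau>" "x = l *\<^sub>R m0 + (1 - l) *\<^sub>R y" by auto
  have "n \<bullet> x + phiP P n = l * (n \<bullet> m0 + phiP P n)"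
    unfolding ly(4) using inner_facet[OF ly(3)] by (simp add: inner_add_right algebra_simps)
  then have "- (n \<bullet> x + phiP P n) / (n \<bullet> m0 + phiP P n) = - l" using lattice_distance_m0_ge_1 by simp
  then show ?thesis using ly facet_subset lifted_h_star_iff by auto
qed

lemma interior_pyramid_nonempty: "interior (convex hull (insert m0 \<tau>)) \<noteq> {}"
proof -
  have "affine hull \<tau> \<subseteq> {x. n \<bullet> x = - phiP P n}"
    using inner_facet by (intro hull_minimal) (auto simp: affine_hyperplane)
  moreover have "n \<bullet> m0 \<noteq> - phiP P n" using lattice_distance_m0_ge_1 by simp
  ultimately have "m0 \<notin> affine hull \<tau>" by blast
  then have "aff_dim (convex hull (insert m0 \<tau>)) = CARD('n)"
    using facet aff_dim_P by (simp add: aff_dim_convex_hull aff_dim_insert codim1_face_def)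
  then have "affine hull (convex hull (insert m0 \<tau>)) = UNIV"
    using aff_dim_eq_full[of "convex hull (insert m0 \<tau>)"] by simp
  then have "rel_interior (convex hull (insert m0 \<tau>)) = interior (convex hull (insert m0 \<tau>))"
    by (rule rel_interior_interior)
  moreover have "rel_interior (convex hull (insert m0 \<tau>)) \<noteq> {}"
    by (simp add: rel_interior_eq_empty)
  ultimately show ?thesis by simp
qed

text \<open>A lower face of the lifted polytope whose shadow meets the interior of the pyramid over
  \<open>\<tau>\<close> is cut out by the pyramid's own affine function, since the difference of the two affine
  functions attains its minimum over the pyramid at an interior point.\<close>
lemma lower_face_over_pyramid:
  assumes lower: "\<And>q. q \<in> lifted P (h_star P) \<Longrightarrow> c \<le> u \<bullet> fst q + snd q"
    and p: "p \<in> interior (convex hull (insert m0 \<tau>))" "(p, t) \<in> lifted P (h_star P)" "u \<bullet> p + t = c"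
  shows "u = (1 / (n \<bullet> m0 + phiP P n)) *\<^sub>R n" "c = - phiP P n / (n \<bullet> m0 + phiP P n)"
proof -
  define k where "k = n \<bullet> m0 + phiP P n"
  have k: "k \<ge> 1" using lattice_distance_m0_ge_1 by (simp add: k_def)
  define \<psi> where "\<psi> x = u \<bullet> x + - (n \<bullet> x + phiP P n) / k" for x
  have \<psi>: "\<psi> x = (u - (1/k) *\<^sub>R n) \<bullet> x - phiP P n / k" for x
    using k by (simp add: \<psi>_def inner_diff_left diff_divide_distrib add_divide_distrib)
  have \<psi>_ge: "c \<le> \<psi> x" if "x \<in> convex hull (insert m0 \<tau>)" for x
    using lower[OF pyramid_graph_in_lifted_h_star[OF that]] unfolding \<psi>_def k_def by simp
  have "\<psi> p \<le> c" using lifted_h_star_above_pyramid[OF p(2)] p(3) unfolding \<psi>_def k_def by simp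
  then have min: "\<psi> p \<le> \<psi> x" if "x \<in> convex hull (insert m0 \<tau>)" for x using \<psi>_ge[OF that] by simp
  have "u - (1/k) *\<^sub>R n = 0"
    by (rule interior_min_inner_imp_zero[OF p(1)]) (use min in \<open>simp add: \<psi>\<close>)
  then show "u = (1 / (n \<bullet> m0 + phiP P n)) *\<^sub>R n" unfolding k_def[symmetric] by simp
  have "\<psi> p = c" using \<open>\<psi> p \<le> c\<close> \<psi>_ge[OF interior_subset[THEN subsetD, OF p(1)]] by simp
  then show "c = - phiP P n / (n \<bullet> m0 + phiP P n)"
    unfolding k_def[symmetric] \<psi> \<open>u - (1/k) *\<^sub>R n = 0\<close> by simp
qed

lemma lattice_pt_in_lower_cell_over_pyramid:
  assumes D: "D \<in> lower_cells P (h_star P)" "D \<inter> interior (convex hull (insert m0 \<tau>)) \<noteq> {}"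
    and v: "v \<in> D" "v \<in> lattice_pts"
  shows "(n \<bullet> v + phiP P n) / (n \<bullet> m0 + phiP P n) \<in> {0, 1}"
proof -
  obtain u c where uc: "\<forall>q\<in>lifted P (h_star P). c \<le> u \<bullet> fst q + snd q"
    "D = fst ` {q\<in>lifted P (h_star P). u \<bullet> fst q + snd q = c}"
    using D(1) unfolding lower_cells_def by blast
  obtain p where "p \<in> D" "p \<in> interior (convex hull (insert m0 \<tau>))" using D(2) by blast
  moreover from this(1) have "p \<in> fst ` {q\<in>lifted P (h_star P). u \<bullet> fst q + snd q = c}"
    using uc(2) by simp
  ultimately obtain t where p: "p \<in> interior (convex hull (insert m0 \<tau>))"
    "(p, t) \<in> lifted P (h_star P)" "u \<bullet> p + t = c"
    by force
  have "\<And>q. q \<in> lifted P (h_star P) \<Longrightarrow> c \<le> u \<bullet> fst q + snd q" using uc(1) by blast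
  note u = lower_face_over_pyramid[OF this p]
  have "v \<in> fst ` {q\<in>lifted P (h_star P). u \<bullet> fst q + snd q = c}" using v(1) uc(2) by simp
  then obtain q where q: "q \<in> lifted P (h_star P)" "u \<bullet> v + snd q = c" "fst q = v" by force
  then obtain l y where ly: "0 \<le> l" "l \<le> 1" "y \<in> P" "q = (l *\<^sub>R m0 + (1 - l) *\<^sub>R y, - l)"
    using lifted_h_star_iff by blast
  have "u \<bullet> v = (n \<bullet> v) / (n \<bullet> m0 + phiP P n)" "snd q = - l" using u(1) ly(4) by simp_all
  then have "(n \<bullet> v) / (n \<bullet> m0 + phiP P n) - l = - phiP P n / (n \<bullet> m0 + phiP P n)"
    using q(2) u(2) by linarith
  then have "(n \<bullet> v + phiP P n) / (n \<bullet> m0 + phiP P n) = l"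
    by (simp add: add_divide_distrib minus_divide_left[symmetric])
  moreover have "v = m0 \<or> l = 0"
  proof (rule ccontr)
    assume "\<not> (v = m0 \<or> l = 0)"
    then have "0 < l" using ly(1) by simp
    then have "y - l *\<^sub>R (y - m0) \<in> interior P"
      by (rule mem_interior_convex_shrink[OF convex_P m0_interior ly(3) _ ly(2)])
    moreover have "y - l *\<^sub>R (y - m0) = v" using q(3) ly(4) by (simp add: algebra_simps)
    ultimately show False using interior_lattice_pts_P v(2) \<open>\<not> (v = m0 \<or> l = 0)\<close> by blast
  qed
  ultimately show ?thesis using lattice_distance_m0_ge_1 by auto
qed

text \<open>A unimodular simplex of the refinement inside the pyramid over \<open>\<tau>\<close> carries the affine
  function \<open>(n \<bullet> x + phiP P n) / k\<close> with integer values on its vertices, so \<open>n / k\<close> is integral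
  on the lattice; as \<open>n\<close> is primitive, \<open>1 / k\<close> is an integer.\<close>
lemma lattice_distance_m0_eq_1:
  assumes "admits_regular_standard_refinement P"
  shows "n \<bullet> m0 + phiP P n = 1"
proof -
  define k where "k = n \<bullet> m0 + phiP P n"
  have k: "k \<ge> 1" using lattice_distance_m0_ge_1 by (simp add: k_def)
  obtain \<omega> where \<omega>: "\<And>C. C \<in> lower_cells P \<omega> \<Longrightarrow> aff_dim C = aff_dim P \<Longrightarrow>
      standard_simplex C \<and> (\<exists>D\<in>lower_cells P (h_star P). C \<subseteq> D)"
    using assms unfolding admits_regular_standard_refinement_def by blast
  have "interior (convex hull (insert m0 \<tau>)) \<subseteq> interior P"
    using m0_in_P facet_subset convex_P by (intro interior_mono hull_minimal) auto
  then obtain C where C: "C \<in> lower_cells P \<omega>" "aff_dim C = aff_dim P"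
      "C \<inter> interior (convex hull (insert m0 \<tau>)) \<noteq> {}"
    by (rule full_dim_lower_cell_meets_open[OF open_interior interior_pyramid_nonempty])
  then obtain D where D: "standard_simplex C" "D \<in> lower_cells P (h_star P)" "C \<subseteq> D"
    using \<omega> by blast
  have vertex_values: "(1/k) *\<^sub>R n \<bullet> v + phiP P n / k \<in> \<int>" if "v \<in> C" "v \<in> lattice_pts" for v
  proof -
    have "(n \<bullet> v + phiP P n) / k \<in> {0, 1}"
      unfolding k_def using lattice_pt_in_lower_cell_over_pyramid[OF D(2) _ _ that(2)] C(3) D(3) that(1)
      by blast
    moreover have "(1/k) *\<^sub>R n \<bullet> v + phiP P n / k = (n \<bullet> v + phiP P n) / k"
      by (simp add: add_divide_distrib)
    ultimately show ?thesis by (metis Ints_0 Ints_1 empty_iff insert_iff)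
  qed
  obtain z where z: "z \<in> lattice_pts" "n \<bullet> z = 1"
    using normal primitive_vec_inner_eq_1 unfolding inward_normal_def by blast
  have "(1/k) *\<^sub>R n \<bullet> z \<in> \<int>" by (rule standard_simplex_affine_Ints[OF D(1) vertex_values z(1)])
  then have "1 / k \<in> \<int>" using z(2) by simp
  then obtain j :: int where j: "1 / k = of_int j" by (elim Ints_cases)
  have "0 < 1 / k" "1 / k \<le> 1" using k by auto
  then have "j = 1" using j by simp
  then show ?thesis using j by (simp add: k_def)
qed

end

lemma aff_dim_check_Delta0_one_interior_lattice_pt:
  assumes "admits_regular_standard_refinement P"
  shows "aff_dim (check_Delta0 P) = CARD('n)"
  using lattice_distance_m0_eq_1[OF _ _ assms] aff_dim_check_Delta0 by (auto simp: facet_normals_def)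

end

theorem lemma1p20:
  fixes Delta :: "(real^'n) set" and d :: nat
  assumes "CARD('n) = d + 1"
    and "lattice_polytope Delta"
    and "aff_dim Delta = int d + 1"
    and "nonsingular Delta"
    and "interior Delta \<inter> lattice_pts \<noteq> {}"
    and "admits_regular_standard_refinement Delta"
  shows "(aff_dim (Delta' Delta) > 0 \<longrightarrow> aff_dim (check_Delta0 Delta) = int d + 2) \<and>
         (aff_dim (Delta' Delta) = 0 \<longrightarrow> aff_dim (check_Delta0 Delta) = int d + 1)"
proof -
  interpret full_lattice_polytope Delta
    by unfold_locales (use assms(1-3) in simp_all)
  have Delta': "aff_dim (Delta' Delta) = aff_dim (interior Delta \<inter> lattice_pts)"
    unfolding Delta'_def by (rule aff_dim_convex_hull)
  show ?thesis
  proof (intro conjI impI)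
    assume "aff_dim (Delta' Delta) > 0"
    then obtain m1 m2 where "m1 \<in> interior Delta \<inter> lattice_pts" "m2 \<in> interior Delta \<inter> lattice_pts"
        "m1 \<noteq> m2"
      unfolding Delta' by (rule aff_dim_pos_imp_distinct_points)
    then have "aff_dim (check_Delta0 Delta) = CARD('n) + 1"
      by (intro aff_dim_check_Delta0_two_interior_lattice_pts) auto
    then show "aff_dim (check_Delta0 Delta) = int d + 2" using assms(1) by simp
  next
    assume "aff_dim (Delta' Delta) = 0"
    then obtain m0 where "interior Delta \<inter> lattice_pts = {m0}" using Delta' aff_dim_eq_0 by metis
    then interpret lattice_polytope_one_interior_pt Delta m0 by unfold_locales
    show "aff_dim (check_Delta0 Delta) = int d + 1"
      using aff_dim_check_Delta0_one_interior_lattice_pt[OF assms(6)] assms(1) by simp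
  qed
qed

end
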